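(* For each integer $k\ge 3$ and each integer $t\ge0$: $m_2^{(1)}(k-1,3t+2)=t v_k+2^{k-1}$, $m_2^{(1)}(k-1,3t+3)=(t+1)v_k$, and $m_2^{(1)}(k-1,3t+4)=(t+1)v_k+1$, where $v_k=2^k-1$.
   Context: For a prime power $q$ and $N\ge1$, a multiset of points in $\mathrm{PG}(N,q)$ is a map $\mathcal{K}$ from the points to $\mathbb{Z}_{\ge0}$, with $\mathcal{K}(S)=\sum_{P\in S}\mathcal{K}(P)$; its cardinality is $\mathcal{K}(\mathrm{PG}(N,q))$. Dimensions are projective (lines have dimension 1). For $0\le r\le N-1$ and a positive integer $w$, $m_q^{(r)}(N,w)$ is the maximum cardinality of a multiset of points in $\mathrm{PG}(N,q)$ such that every $r$-dimensional subspace has multiplicity at most $w$. *)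

theory Defs
  imports Main
begin

text \<open>The vector space GF(2)^(N+1) is modelled
  as the power set of the coordinate set {0..N}: a vector is identified with its support,
  and vector addition over GF(2) is symmetric difference.  The points of PG(N,2)
  (one-dimensional subspaces) are exactly the nonzero vectors.\<close>

definition bvecs :: "nat \<Rightarrow> nat set set" where
  "bvecs N = Pow {0..N}"

definition bpoints :: "nat \<Rightarrow> nat set set" where
  "bpoints N = bvecs N - {{}}"

definition badd :: "nat set \<Rightarrow> nat set \<Rightarrow> nat set" where
  "badd a b = (a - b) \<union> (b - a)"

text \<open>An r-dimensional projective subspace of PG(N,2), given by its set of points S:
  S together with the zero vector is a linear subspace (closed under addition) of
  vector dimension r+1, i.e. of cardinality 2^(r+1).\<close>

definition bsubspace :: "nat \<Rightarrow> nat \<Rightarrow> nat set set \<Rightarrow> bool" where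
  "bsubspace N r S \<longleftrightarrow> S \<subseteq> bpoints N
     \<and> (\<forall>a\<in>insert {} S. \<forall>b\<in>insert {} S. badd a b \<in> insert {} S)
     \<and> card (insert {} S) = 2 ^ (r + 1)"

text \<open>A multiset of points is a function K from points to nonnegative integers
  (values outside the point set are irrelevant).  Its multiplicity on a set S of points
  is the sum over S; its cardinality is its multiplicity on the whole space.\<close>

definition admissible :: "nat \<Rightarrow> nat \<Rightarrow> nat \<Rightarrow> (nat set \<Rightarrow> nat) \<Rightarrow> bool" where
  "admissible N r w K \<longleftrightarrow> (\<forall>S. bsubspace N r S \<longrightarrow> sum K S \<le> w)"

definition m2 :: "nat \<Rightarrow> nat \<Rightarrow> nat \<Rightarrow> nat" where
  "m2 r N w = Max {sum K (bpoints N) | K. admissible N r w K}"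

end

theory Submission
  imports Defs
begin

text \<open>Write \<open>w = 3c + e\<close> and \<open>v = 2^(N+1) - 1\<close> for the number of points. If every point has
  multiplicity at most \<open>c\<close>, the cardinality is at most \<open>c v\<close>. Otherwise pick a point \<open>a\<close> with
  \<open>K a > c\<close>: the \<open>2^N - 1\<close> lines through \<open>a\<close> partition the remaining points, so the cardinality
  is at most \<open>K a + (2^N - 1)(w - K a) \<le> c v + (2^N - 1) e - (2^N - 2)\<close>.
  For \<open>e = 2, 0, 1\<close> this bound is attained by the constant multiset \<open>c\<close> raised by one on the
  complement of a hyperplane (a line meets every hyperplane), not at all, or at a single point.\<close>

lemma badd_badd_cancel [simp]: "badd a (badd a x) = x"
  by (auto simp: badd_def)

lemma finite_bpoints [simp]: "finite (bpoints N)"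
  by (simp add: bpoints_def bvecs_def)

lemma card_bpoints: "card (bpoints N) = 2 ^ (N + 1) - 1"
proof -
  have "card (bvecs N) = 2 ^ (N + 1)" and "{} \<in> bvecs N"
    by (simp_all add: bvecs_def card_Pow)
  then show ?thesis by (simp add: bpoints_def bvecs_def card_Diff_singleton)
qed

lemma card_bpoints_mem:
  assumes "i \<le> N"
  shows "card {x \<in> bpoints N. i \<in> x} = 2 ^ N"
proof -
  have "{x \<in> bpoints N. i \<in> x} = insert i ` Pow ({0..N} - {i})"
  proof (intro equalityI subsetI)
    fix x assume "x \<in> {x \<in> bpoints N. i \<in> x}"
    then have "x = insert i (x - {i})" "x - {i} \<in> Pow ({0..N} - {i})"
      by (auto simp: bpoints_def bvecs_def)
    then show "x \<in> insert i ` Pow ({0..N} - {i})" by blast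
  qed (use assms in \<open>auto simp: bpoints_def bvecs_def\<close>)
  moreover have "inj_on (insert i) (Pow ({0..N} - {i}))"
    by (rule inj_onI) (auto simp: insert_ident)
  moreover have "card ({0..N} - {i}) = N" using assms by simp
  ultimately show ?thesis by (simp add: card_image card_Pow)
qed

lemma bsubspace_line:
  assumes "a \<in> bpoints N" "b \<in> bpoints N" "a \<noteq> b"
  shows "bsubspace N 1 {a, b, badd a b}"
proof -
  have distinct: "{} \<noteq> a" "{} \<noteq> b" "{} \<noteq> badd a b" "a \<noteq> badd a b" "b \<noteq> badd a b"
    using assms by (auto simp: bpoints_def badd_def)
  have "badd a b \<in> bpoints N"
    using assms distinct by (auto simp: bpoints_def bvecs_def badd_def)
  moreover have "badd u v \<in> {{}, a, b, badd a b}" if "u \<in> {{}, a, b, badd a b}"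
      and "v \<in> {{}, a, b, badd a b}" for u v
    using that by (auto simp: badd_def)
  moreover have "card {{}, a, b, badd a b} = 4"
    using distinct assms(3) by simp
  ultimately show ?thesis using assms by (simp add: bsubspace_def)
qed

lemma bsubspace_line_card: "bsubspace N 1 S \<Longrightarrow> finite S \<and> card S = 3"
proof -
  assume S: "bsubspace N 1 S"
  then have "{} \<notin> S" and card4: "card (insert {} S) = 4"
    by (auto simp: bsubspace_def bpoints_def)
  moreover from card4 have "finite S"
    by (metis card.infinite finite_insert zero_neq_numeral)
  ultimately show ?thesis by simp
qed

lemma bsubspace_line_not_all_mem:
  assumes "bsubspace N 1 S"
  shows "\<exists>x\<in>S. i \<notin> x"
proof -
  obtain a b c where S: "S = {a, b, c}" "a \<noteq> b" "a \<noteq> c" "b \<noteq> c"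
    using bsubspace_line_card[OF assms] card_3_iff by metis
  have "badd a b \<in> insert {} S" "badd a b \<noteq> {}"
    using assms S by (auto simp: bsubspace_def badd_def)
  moreover have "i \<notin> badd a b" if "i \<in> a" "i \<in> b"
    using that by (simp add: badd_def)
  ultimately show ?thesis using S by auto
qed

lemma admissible_line_sum_le:
  assumes "admissible N 1 w K" "a \<in> bpoints N" "b \<in> bpoints N" "a \<noteq> b"
  shows "K a + K b + K (badd a b) \<le> w"
proof -
  have "a \<noteq> badd a b" "b \<noteq> badd a b" using assms by (auto simp: bpoints_def badd_def)
  then have "sum K {a, b, badd a b} = K a + K b + K (badd a b)"
    using assms(4) by (simp add: add.assoc)
  then show ?thesis
    using assms bsubspace_line by (metis admissible_def)
qed

lemma admissible_point_le:
  assumes "N \<ge> 1" "admissible N 1 w K" "a \<in> bpoints N"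
  shows "K a \<le> w"
proof -
  define b :: "nat set" where "b = (if a = {0} then {1} else {0})"
  have "b \<in> bpoints N" "b \<noteq> a"
    using assms(1) by (auto simp: b_def bpoints_def bvecs_def)
  then show ?thesis
    using admissible_line_sum_le[OF assms(2,3)] by fastforce
qed

lemma sum_bpoints_le_pencil:
  assumes adm: "admissible N 1 w K" and a: "a \<in> bpoints N"
  shows "sum K (bpoints N) \<le> K a + (2 ^ N - 1) * (w - K a)"
proof -
  define A where "A = bpoints N - {a}"
  have partner: "badd a x \<in> A" if "x \<in> A" for x
    using that a by (auto simp: A_def bpoints_def bvecs_def badd_def)
  have line: "K x + K (badd a x) \<le> w - K a" if "x \<in> A" for x
  proof -
    have "x \<in> bpoints N" "a \<noteq> x" using that by (auto simp: A_def)
    then show ?thesis using admissible_line_sum_le[OF adm a] by fastforce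
  qed
  have "sum (\<lambda>x. K (badd a x)) A = sum K A"
    by (rule sum.reindex_bij_witness[where i="badd a" and j="badd a"]) (auto simp: partner)
  then have "2 * sum K A = (\<Sum>x\<in>A. K x + K (badd a x))"
    by (simp add: sum.distrib)
  also have "\<dots> \<le> of_nat (card A) * (w - K a)"
    using line by (rule sum_bounded_above)
  also have "card A = 2 * (2 ^ N - 1)"
    using a by (simp add: A_def card_bpoints)
  finally have "sum K A \<le> (2 ^ N - 1) * (w - K a)"
    by simp
  moreover have "sum K (bpoints N) = K a + sum K A"
    using a by (simp add: A_def sum.remove)
  ultimately show ?thesis by simp
qed

text \<open>The truncated subtraction is intended: for \<open>e = 0\<close> the bound is just \<open>c * (2^(N+1) - 1)\<close>.\<close>

lemma admissible_sum_bpoints_le: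
  assumes N: "N \<ge> 1" and adm: "admissible N 1 (3 * c + e) K"
  shows "sum K (bpoints N) \<le> c * (2 ^ (N + 1) - 1) + ((2 ^ N - 1) * e - (2 ^ N - 2))"
proof -
  obtain g where g: "(2::nat) ^ N = g + 2"
    using N by (metis le_add_diff_inverse2 one_le_numeral power_increasing power_one_right)
  consider "\<forall>a\<in>bpoints N. K a \<le> c" | a where "a \<in> bpoints N" "c < K a"
    using not_le by blast
  then show ?thesis
  proof cases
    case 1
    then have "sum K (bpoints N) \<le> of_nat (card (bpoints N)) * c"
      by (intro sum_bounded_above) auto
    then show ?thesis by (simp add: card_bpoints mult.commute)
  next
    case 2
    obtain d where d: "3 * c + e = K a + d"
      using admissible_point_le[OF N adm 2(1)] le_Suc_ex by blast
    have "sum K (bpoints N) \<le> K a + (g + 1) * d"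
      using sum_bpoints_le_pencil[OF adm 2(1)] d g by simp
    moreover have "g * (d + 1) \<le> g * (2 * c + e)"
      using d 2(2) by (intro mult_left_mono) auto
    ultimately show ?thesis
      using d g by (simp add: algebra_simps)
  qed
qed

lemma m2_eqI:
  assumes "admissible N r w K" "sum K (bpoints N) = v"
    and "\<And>K. admissible N r w K \<Longrightarrow> sum K (bpoints N) \<le> v"
  shows "m2 r N w = v"
proof -
  have "finite {sum K (bpoints N) | K. admissible N r w K}"
    by (rule finite_subset[of _ "{..v}"]) (use assms(3) in auto)
  then show ?thesis
    unfolding m2_def by (rule Max_eqI) (use assms in auto)
qed

lemma m2_line_3c:
  assumes "N \<ge> 1"
  shows "m2 1 N (3 * c) = c * (2 ^ (N + 1) - 1)"
proof (rule m2_eqI)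
  show "admissible N 1 (3 * c) (\<lambda>_. c)"
    by (simp add: admissible_def bsubspace_line_card)
  show "sum (\<lambda>_. c) (bpoints N) = c * (2 ^ (N + 1) - 1)"
    by (simp add: card_bpoints)
  show "sum K (bpoints N) \<le> c * (2 ^ (N + 1) - 1)" if "admissible N 1 (3 * c) K" for K
    using admissible_sum_bpoints_le[OF assms, of c 0] that by simp
qed

lemma m2_line_3c_plus_1:
  assumes "N \<ge> 1"
  shows "m2 1 N (3 * c + 1) = c * (2 ^ (N + 1) - 1) + 1"
proof (rule m2_eqI)
  let ?K = "\<lambda>x. c + of_bool (x = {0})"
  show "admissible N 1 (3 * c + 1) ?K"
  proof (unfold admissible_def, intro allI impI)
    fix S assume "bsubspace N 1 S"
    moreover have "card (S \<inter> {x. x = {0}}) \<le> 1"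
      by (rule order_trans[OF card_mono[of "{{0}}"]]) auto
    ultimately show "sum ?K S \<le> 3 * c + 1"
      using bsubspace_line_card by (simp add: sum.distrib)
  qed
  have "bpoints N \<inter> {x. x = {0}} = {{0}}"
    by (auto simp: bpoints_def bvecs_def)
  then show "sum ?K (bpoints N) = c * (2 ^ (N + 1) - 1) + 1"
    by (simp add: sum.distrib card_bpoints)
  show "sum K (bpoints N) \<le> c * (2 ^ (N + 1) - 1) + 1" if "admissible N 1 (3 * c + 1) K" for K
    using admissible_sum_bpoints_le[OF assms that] by simp
qed

lemma m2_line_3c_plus_2:
  assumes "N \<ge> 1"
  shows "m2 1 N (3 * c + 2) = c * (2 ^ (N + 1) - 1) + 2 ^ N"
proof (rule m2_eqI)
  let ?K = "\<lambda>x. c + of_bool (0 \<in> x)"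
  show "admissible N 1 (3 * c + 2) ?K"
  proof (unfold admissible_def, intro allI impI)
    fix S assume S: "bsubspace N 1 S"
    then have "S \<inter> {x. 0 \<in> x} \<subset> S"
      using bsubspace_line_not_all_mem by blast
    then have "card (S \<inter> {x. 0 \<in> x}) < 3"
      using S bsubspace_line_card psubset_card_mono by metis
    then show "sum ?K S \<le> 3 * c + 2"
      using S bsubspace_line_card by (simp add: sum.distrib)
  qed
  show "sum ?K (bpoints N) = c * (2 ^ (N + 1) - 1) + 2 ^ N"
    using card_bpoints_mem[of 0 N] by (simp add: sum.distrib card_bpoints Int_def)
  show "sum K (bpoints N) \<le> c * (2 ^ (N + 1) - 1) + 2 ^ N" if "admissible N 1 (3 * c + 2) K" for K
  proof -
    have "(2::nat) ^ N \<ge> 2"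
      using assms by (metis one_le_numeral power_increasing power_one_right)
    then show ?thesis
      using admissible_sum_bpoints_le[OF assms that] by simp
  qed
qed

theorem mainTheorem4:
  fixes k t :: nat
  assumes "k \<ge> 3"
  shows "m2 1 (k - 1) (3 * t + 2) = t * (2 ^ k - 1) + 2 ^ (k - 1)
       \<and> m2 1 (k - 1) (3 * t + 3) = (t + 1) * (2 ^ k - 1)
       \<and> m2 1 (k - 1) (3 * t + 4) = (t + 1) * (2 ^ k - 1) + 1"
proof -
  have N: "k - 1 \<ge> 1" and k_eq: "k - 1 + 1 = k"
    using assms by simp_all \<comment> \<open>only \<open>k \<ge> 2\<close> is needed\<close>
  have "3 * t + 3 = 3 * (t + 1)" and "3 * t + 4 = 3 * (t + 1) + 1"
    by simp_all
  then show ?thesis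
    using m2_line_3c_plus_2[OF N, of t] m2_line_3c[OF N, of "t + 1"]
      m2_line_3c_plus_1[OF N, of "t + 1"]
    unfolding k_eq by presburger
qed

end
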